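(* Let $p$ be a prime and $n$ a positive integer. Let $\overline{m}=\min\{m\in\mathbb{N} : v_p((pm)!)\geq n\}$. Then $$\mathcal{Q}_n=\big(q_{n,0}G_0(X),\,q_{n,1}G_1(X),\dots,q_{n,\overline{m}}G_{\overline{m}}(X)\big),$$ where $q_{n,m}=p^{\,n-v_p((pm)!)}$ for $0\leq m<\overline{m}$ and $q_{n,\overline{m}}=1$. More generally, for each $j\in\{0,\dots,p-1\}$, $$\mathcal{Q}_{n,j}=\big(q_{n,0}G_0(X-j),\dots,q_{n,\overline{m}}G_{\overline{m}}(X-j)\big).$$
   Context: Fix a prime $p$ and $n\geq1$. For $j\in\{0,\dots,p-1\}$, $\mathcal{Q}_{n,j}=\bigcap_{i\in\{0,\dots,p^n-1\},\ i\equiv j\ (\mathrm{mod}\ p)}(p^n,X-i)\subseteq\mathbb{Z}[X]$, and $\mathcal{Q}_n=\mathcal{Q}_{n,0}$. For $k\geq1$, $G_k(X)=\prod_{h=0}^{k-1}(X-hp)$, and $G_0(X)=1$. $v_p$ is the $p$-adic valuation. *)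

theory Defs
  imports "HOL-Computational_Algebra.Computational_Algebra"
begin

definition gen_ideal :: "'a::comm_ring_1 set \<Rightarrow> 'a set" where
  "gen_ideal S = {x. \<exists>c F. finite F \<and> F \<subseteq> S \<and> x = (\<Sum>s\<in>F. c s * s)}"

definition Qnj :: "nat \<Rightarrow> nat \<Rightarrow> nat \<Rightarrow> int poly set" where
  "Qnj p n j = (\<Inter>i\<in>{i. i < p ^ n \<and> i mod p = j}.
      gen_ideal {[:int p ^ n:], [:- int i, 1:]})"

definition Qn :: "nat \<Rightarrow> nat \<Rightarrow> int poly set" where
  "Qn p n = Qnj p n 0"

definition G :: "nat \<Rightarrow> nat \<Rightarrow> int poly" where
  "G p k = (\<Prod>h<k. [:- (int h * int p), 1:])"

end

theory Submission
  imports Defs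
begin

text \<open>
  Values of integer polynomials are periodic modulo p^n, and f lies in (a, X - b) iff a divides
  f(b); hence Q_{n,j} consists of the f such that p^n divides f(j + pk) for all k. Expand
  f = sum_{m<M} a_m H_m + H_M s in the Newton basis H_m = G_m(X - j). As H_m(j + pk) =
  p^m m! binom(k, m) and the matrix of binomial coefficients is unitriangular, p^n divides all
  these values iff p^n divides every a_m p^m m!, i.e. iff p^(n - v_p(p^m m!)) divides a_m; and
  v_p(p^m m!) = v_p((pm)!). The tail H_M s lies in the ideal as soon as p^n divides p^M M!, which
  is how mbar enters. The argument works for any modulus N and progression c + dk, with
  N / gcd(N, d^m m!) in place of p^(n - v_p(p^m m!)).
\<close>

interpretation ring_module: module "(*) :: 'a::comm_ring_1 \<Rightarrow> 'a \<Rightarrow> 'a"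
  by unfold_locales (simp_all add: algebra_simps)

lemma gen_ideal_eq_span: "gen_ideal S = ring_module.span S"
  unfolding gen_ideal_def ring_module.span_explicit by blast

lemma mem_gen_ideal_const_linear_iff:
  fixes a b :: "'a::comm_ring_1"
  shows "f \<in> gen_ideal {[:a:], [:-b, 1:]} \<longleftrightarrow> a dvd poly f b"
proof
  have "ring_module.subspace {f. a dvd poly f b}"
    by (auto simp: ring_module.subspace_def)
  then have "gen_ideal {[:a:], [:-b, 1:]} \<subseteq> {f. a dvd poly f b}"
    unfolding gen_ideal_eq_span by (intro ring_module.span_minimal) auto
  then show "f \<in> gen_ideal {[:a:], [:-b, 1:]} \<Longrightarrow> a dvd poly f b" by blast
next
  assume "a dvd poly f b"
  then obtain t where "poly f b = a * t" by blast
  then have "f = [:t:] * [:a:] + synthetic_div f b * [:-b, 1:]"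
    using synthetic_div_correct'[of b f] by (simp add: algebra_simps)
  also have "\<dots> \<in> gen_ideal {[:a:], [:-b, 1:]}"
    unfolding gen_ideal_eq_span
    by (intro ring_module.span_add ring_module.span_scale ring_module.span_base) auto
  finally show "f \<in> gen_ideal {[:a:], [:-b, 1:]}" .
qed

lemma diff_dvd_poly_diff:
  fixes x y :: "'a::comm_ring_1"
  shows "(x - y) dvd poly f x - poly f y"
proof -
  have "poly f x - poly f y = (x - y) * poly (synthetic_div f y) x"
    using arg_cong[OF synthetic_div_correct'[of y f], of "\<lambda>g. poly g x"] by (simp add: algebra_simps)
  then show ?thesis by simp
qed

lemma Qnj_eq_values_on_progression:
  assumes "0 < p" and "j < p"
  shows "Qnj p n j = {f. \<forall>k::nat. int p ^ n dvd poly f (int j + int p * int k)}"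
proof -
  have "Qnj p n j = {f. \<forall>i. i < p ^ n \<and> i mod p = j \<longrightarrow> int p ^ n dvd poly f (int i)}"
    unfolding Qnj_def by (auto simp: mem_gen_ideal_const_linear_iff)
  also have "\<dots> = {f. \<forall>k::nat. int p ^ n dvd poly f (int j + int p * int k)}"
  proof (intro Collect_cong iffI allI impI)
    fix f k
    assume on_residues: "\<forall>i. i < p ^ n \<and> i mod p = j \<longrightarrow> int p ^ n dvd poly f (int i)"
    show "int p ^ n dvd poly f (int j + int p * int k)"
    proof (cases "n = 0")
      case False
      define i where "i = (j + p * k) mod p ^ n"
      have "i mod p = (j + p * k) mod p"
        using False unfolding i_def by (simp add: mod_mod_cancel)
      then have "int p ^ n dvd poly f (int i)"
        using on_residues assms by (simp add: i_def)
      moreover have "int p ^ n dvd int (j + p * k) - int i"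
        unfolding i_def of_nat_mod of_nat_power by (rule dvd_minus_mod)
      then have "int p ^ n dvd poly f (int (j + p * k)) - poly f (int i)"
        using diff_dvd_poly_diff by (rule dvd_trans)
      ultimately have "int p ^ n dvd poly f (int (j + p * k)) - poly f (int i) + poly f (int i)"
        by (rule dvd_add[rotated])
      then show ?thesis by simp
    qed simp
  next
    fix f i
    assume "\<forall>k::nat. int p ^ n dvd poly f (int j + int p * int k)" and "i < p ^ n \<and> i mod p = j"
    moreover have "int i = int (i mod p) + int p * int (i div p)"
      by (simp flip: of_nat_mult of_nat_add)
    ultimately show "int p ^ n dvd poly f (int i)" by metis
  qed
  finally show ?thesis .
qed

definition progression_poly :: "'a::comm_ring_1 \<Rightarrow> 'a \<Rightarrow> nat \<Rightarrow> 'a poly" where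
  "progression_poly c d m = (\<Prod>h<m. [:- (c + of_nat h * d), 1:])"

definition progression_weight :: "'a::comm_ring_1 \<Rightarrow> nat \<Rightarrow> 'a" where
  "progression_weight d m = d ^ m * of_nat (fact m)"

lemma progression_poly_Suc:
  "progression_poly c d (Suc m) = progression_poly c d m * [:- (c + of_nat m * d), 1:]"
  unfolding progression_poly_def by simp

lemma pcompose_G_eq_progression_poly:
  "pcompose (G p m) [:- int j, 1:] = progression_poly (int j) (int p) m"
  unfolding G_def progression_poly_def pcompose_prod
  by (intro prod.cong refl) (simp add: pcompose_pCons algebra_simps)

lemma prod_diff_eq_fact_binomial:
  "(\<Prod>h<m. of_nat k - of_nat h) = (of_nat (fact m * (k choose m)) :: 'a::comm_ring_1)"
proof -
  have "rat_of_int (\<Prod>h<m. int k - int h) = (\<Prod>h<m. of_nat k - of_nat h)" by simp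
  also have "\<dots> = fact m * (of_nat k gchoose m)"
    by (simp add: gbinomial_mult_fact atLeast0LessThan)
  also have "\<dots> = of_int (int (fact m * (k choose m)))" by (simp add: binomial_gbinomial)
  finally have "(\<Prod>h<m. int k - int h) = int (fact m * (k choose m))"
    by (simp only: of_int_eq_iff)
  then have "of_int (\<Prod>h<m. int k - int h) = (of_int (int (fact m * (k choose m))) :: 'a)"
    by (rule arg_cong)
  then show ?thesis by (simp only: of_int_prod of_int_diff of_int_of_nat_eq)
qed

lemma poly_progression_poly:
  "poly (progression_poly c d m) (c + d * of_nat k) = progression_weight d m * of_nat (k choose m)"
proof -
  have "poly (progression_poly c d m) (c + d * of_nat k) = (\<Prod>h<m. d * (of_nat k - of_nat h))"
    unfolding progression_poly_def poly_prod by (intro prod.cong refl) (simp add: algebra_simps)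
  also have "\<dots> = d ^ m * (\<Prod>h<m. of_nat k - of_nat h)"
    by (simp add: prod.distrib)
  finally show ?thesis
    by (simp only: prod_diff_eq_fact_binomial of_nat_mult mult.assoc progression_weight_def)
qed

lemma progression_poly_expansion:
  "\<exists>a s. f = (\<Sum>m<M. smult (a m) (progression_poly c d m)) + progression_poly c d M * s"
proof (induction M)
  case 0
  show ?case by (auto simp: progression_poly_def intro!: exI[of _ f])
next
  case (Suc M)
  then obtain a s
    where f: "f = (\<Sum>m<M. smult (a m) (progression_poly c d m)) + progression_poly c d M * s"
    by blast
  define x where "x = c + of_nat M * d"
  have "progression_poly c d M * s
      = smult (poly s x) (progression_poly c d M) + progression_poly c d (Suc M) * synthetic_div s x"
    using arg_cong[OF synthetic_div_correct'[of x s], of "\<lambda>g. progression_poly c d M * g"]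
    by (simp add: progression_poly_Suc x_def algebra_simps)
  then have "f = (\<Sum>m<Suc M. smult ((a(M := poly s x)) m) (progression_poly c d m))
      + progression_poly c d (Suc M) * synthetic_div s x"
    using f by simp
  then show ?case by blast
qed

lemma dvd_coeffs_of_binomial_sums:
  fixes x :: "nat \<Rightarrow> 'a::comm_ring_1"
  assumes sums: "\<And>k. k < M \<Longrightarrow> N dvd (\<Sum>m<M. x m * of_nat (k choose m))"
  shows "k < M \<Longrightarrow> N dvd x k"
proof (induction k rule: less_induct)
  case (less k)
  have "(\<Sum>m<M. x m * of_nat (k choose m)) = (\<Sum>m<Suc k. x m * of_nat (k choose m))"
    using less.prems by (intro sum.mono_neutral_right) (auto simp: binomial_eq_0)
  also have "\<dots> = x k + (\<Sum>m<k. x m * of_nat (k choose m))"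
    by simp
  finally have "N dvd x k + (\<Sum>m<k. x m * of_nat (k choose m))"
    using sums[OF less.prems] by simp
  moreover have "N dvd (\<Sum>m<k. x m * of_nat (k choose m))"
    using less.IH less.prems by (intro dvd_sum) simp
  ultimately show ?case by (simp add: dvd_add_left_iff)
qed

lemma dvd_mult_iff_div_gcd_dvd:
  fixes a b c :: "'a::semiring_gcd"
  assumes "a \<noteq> 0"
  shows "a dvd b * c \<longleftrightarrow> a div gcd a c dvd b"
proof -
  define g where "g = gcd a c"
  have g: "g \<noteq> 0" using assms by (simp add: g_def)
  have a: "a = g * (a div g)" and c: "c = g * (c div g)" by (simp_all add: g_def)
  have coprime: "coprime (a div g) (c div g)"
    using assms by (simp add: g_def div_gcd_coprime)
  have "a dvd b * c \<longleftrightarrow> g * (a div g) dvd g * (b * (c div g))"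
    by (subst (1 2) a, subst c) (simp add: ac_simps)
  also have "\<dots> \<longleftrightarrow> a div g dvd b * (c div g)"
    using g by (rule dvd_times_left_cancel_iff)
  also have "\<dots> \<longleftrightarrow> a div g dvd b"
    using coprime by (simp add: coprime_dvd_mult_left_iff)
  finally show ?thesis by (simp add: g_def)
qed

lemma values_on_progression_subspace:
  "ring_module.subspace {f. \<forall>k::nat. N dvd poly f (c + d * of_nat k)}"
  by (auto simp: ring_module.subspace_def)

lemma gen_ideal_progression_polys_subset:
  fixes N c d :: "'a::ring_gcd"
  shows "gen_ideal ((\<lambda>m. smult (N div gcd N (progression_weight d m)) (progression_poly c d m)) ` A)
    \<subseteq> {f. \<forall>k::nat. N dvd poly f (c + d * of_nat k)}"
  unfolding gen_ideal_eq_span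
proof (intro ring_module.span_minimal values_on_progression_subspace image_subsetI CollectI allI)
  fix m k
  define w where "w = progression_weight d m"
  have "N div gcd N w * w = N * (w div gcd N w)"
    by (metis dvd_div_mult dvd_mult_div_cancel gcd_dvd1 gcd_dvd2 mult.commute)
  then show "N dvd poly (smult (N div gcd N w) (progression_poly c d m)) (c + d * of_nat k)"
    unfolding poly_smult poly_progression_poly w_def[symmetric] mult.assoc[symmetric] by simp
qed

lemma smult_progression_poly_mem_gen_ideal:
  fixes N c d :: "'a::ring_gcd"
  assumes "N \<noteq> 0" and "N dvd b * progression_weight d m" and "m \<in> A"
  shows "smult b (progression_poly c d m)
    \<in> gen_ideal ((\<lambda>m. smult (N div gcd N (progression_weight d m)) (progression_poly c d m)) ` A)"
proof -
  obtain e where "b = (N div gcd N (progression_weight d m)) * e"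
    using assms(1,2) by (auto simp: dvd_mult_iff_div_gcd_dvd)
  then have "smult b (progression_poly c d m)
      = [:e:] * smult (N div gcd N (progression_weight d m)) (progression_poly c d m)"
    by (simp add: mult.commute)
  also have "\<dots> \<in> gen_ideal ((\<lambda>m. smult (N div gcd N (progression_weight d m)) (progression_poly c d m)) ` A)"
    unfolding gen_ideal_eq_span using assms(3)
    by (intro ring_module.span_scale ring_module.span_base) simp
  finally show ?thesis .
qed

lemma values_on_progression_eq_gen_ideal:
  fixes N c d :: "'a::ring_gcd"
  assumes "N \<noteq> 0" and "N dvd progression_weight d M"
  shows "{f. \<forall>k::nat. N dvd poly f (c + d * of_nat k)}
    = gen_ideal ((\<lambda>m. smult (N div gcd N (progression_weight d m)) (progression_poly c d m)) ` {0..M})"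
    (is "?values = gen_ideal ?gens")
proof
  show "gen_ideal ?gens \<subseteq> ?values"
    by (rule gen_ideal_progression_polys_subset)
next
  show "?values \<subseteq> gen_ideal ?gens"
  proof
    fix f assume "f \<in> ?values"
    then have f_values: "N dvd poly f (c + d * of_nat k)" for k by simp
    obtain a s where f: "f = (\<Sum>m<M. smult (a m) (progression_poly c d m)) + progression_poly c d M * s"
      using progression_poly_expansion by blast
    have binomial_sums: "N dvd (\<Sum>m<M. a m * progression_weight d m * of_nat (k choose m))"
      if "k < M" for k
    proof -
      have "poly f (c + d * of_nat k)
          = (\<Sum>m<M. a m * poly (progression_poly c d m) (c + d * of_nat k))
            + poly (progression_poly c d M) (c + d * of_nat k) * poly s (c + d * of_nat k)"
        by (simp add: f poly_sum)
      also have "\<dots> = (\<Sum>m<M. a m * (progression_weight d m * of_nat (k choose m)))"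
        unfolding poly_progression_poly binomial_eq_0[OF that] by simp
      also have "\<dots> = (\<Sum>m<M. a m * progression_weight d m * of_nat (k choose m))"
        by (simp only: mult.assoc)
      finally show ?thesis using f_values[of k] by simp
    qed
    have "N dvd a m * progression_weight d m" if "m < M" for m
      using binomial_sums that by (rule dvd_coeffs_of_binomial_sums)
    then have "smult (a m) (progression_poly c d m) \<in> gen_ideal ?gens" if "m \<in> {..<M}" for m
      using assms(1) that by (intro smult_progression_poly_mem_gen_ideal) simp_all
    then have "(\<Sum>m<M. smult (a m) (progression_poly c d m)) \<in> gen_ideal ?gens"
      unfolding gen_ideal_eq_span by (rule ring_module.span_sum)
    moreover have "smult 1 (progression_poly c d M) \<in> gen_ideal ?gens"
      using assms(1) by (rule smult_progression_poly_mem_gen_ideal) (simp_all add: assms(2))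
    then have "progression_poly c d M * s \<in> gen_ideal ?gens"
      unfolding gen_ideal_eq_span by (simp add: ring_module.span_scale mult.commute)
    ultimately show "f \<in> gen_ideal ?gens"
      unfolding f gen_ideal_eq_span by (rule ring_module.span_add)
  qed
qed

lemma prime_power_div_gcd:
  fixes p x :: nat
  assumes "prime p" and "x \<noteq> 0"
  shows "p ^ n div gcd (p ^ n) x = p ^ (n - multiplicity p x)"
proof -
  define v where "v = multiplicity p x"
  obtain u where x: "x = p ^ v * u" and "\<not> p dvd u"
    using multiplicity_decompose'[OF assms(2), of p] assms(1) unfolding v_def
    by (metis not_prime_unit)
  then have "coprime (p ^ n) u"
    using assms(1) by (simp add: prime_imp_coprime)
  then have "gcd (p ^ n) x = gcd (p ^ n) (p ^ v)"
    unfolding x by (rule gcd_mult_right_right_cancel)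
  also have "\<dots> = p ^ min n v"
    by (cases "n \<le> v") (simp_all add: le_imp_power_dvd gcd_nat.absorb1 gcd_nat.absorb2 min_def)
  finally show ?thesis
    using assms(1) by (simp add: v_def power_diff prime_gt_0_nat min_def)
qed

lemma prime_not_dvd_prod_between_multiples:
  fixes p :: nat
  assumes "prime p"
  shows "\<not> p dvd (\<Prod>i\<in>{p * m + 1..<p * m + p}. i)"
proof
  assume "p dvd (\<Prod>i\<in>{p * m + 1..<p * m + p}. i)"
  then obtain i where "i \<in> {p * m + 1..<p * m + p}" and "p dvd i"
    using prime_dvd_prod_iff[OF _ assms, of "{p * m + 1..<p * m + p}" "\<lambda>i. i"] by auto
  then obtain r where "i = p * m + r" "0 < r" "r < p"
    by (intro that[of "i - p * m"]) auto
  with \<open>p dvd i\<close> show False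
    by (auto simp: dvd_add_right_iff dest: dvd_imp_le)
qed

lemma multiplicity_fact_prime_mult:
  fixes p :: nat
  assumes "prime p"
  shows "multiplicity p (fact (p * m)) = m + multiplicity p (fact m)"
proof (induction m)
  case (Suc m)
  have p: "0 < p" "prime_elem p" using assms prime_gt_0_nat by auto
  define c where "c = (\<Prod>i\<in>{p * m + 1..<p * m + p}. i)"
  have "p * m \<le> p * Suc m" by simp
  then have "fact (p * Suc m) div fact (p * m) = (\<Prod>i\<in>{p * m + 1..p * m + p}. i)"
    by (simp add: fact_div_fact add.commute)
  then have "fact (p * Suc m) = fact (p * m) * (\<Prod>i\<in>{p * m + 1..p * m + p}. i)"
    by (metis \<open>p * m \<le> p * Suc m\<close> dvd_div_mult_self fact_dvd mult.commute)
  also have "{p * m + 1..p * m + p} = insert (p * m + p) {p * m + 1..<p * m + p}"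
    using p(1) by auto
  finally have fact_mult_Suc: "fact (p * Suc m) = fact (p * m) * (c * (p * Suc m))"
    by (simp add: c_def mult.commute)
  have "multiplicity p c = 0" and "c \<noteq> 0"
    using prime_not_dvd_prod_between_multiples[OF assms, of m]
    by (simp_all add: c_def not_dvd_imp_multiplicity_0)
  then have "multiplicity p (fact (p * Suc m))
      = multiplicity p (fact (p * m)) + Suc (multiplicity p (Suc m))"
    using p unfolding fact_mult_Suc
    by (simp add: prime_elem_multiplicity_mult_distrib multiplicity_times_same del: mult_Suc_right)
  moreover have "multiplicity p (fact (Suc m)) = multiplicity p (Suc m) + multiplicity p (fact m)"
    using p by (simp only: fact_Suc of_nat_id)
      (simp add: prime_elem_multiplicity_mult_distrib del: mult_Suc)
  ultimately show ?case
    using Suc.IH by simp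
qed simp

lemma multiplicity_prime_progression_weight:
  fixes p :: nat
  assumes "prime p"
  shows "multiplicity p (p ^ m * fact m) = multiplicity p (fact (p * m))"
  using assms by (simp add: multiplicity_fact_prime_mult prime_elem_multiplicity_mult_distrib)

lemma prime_power_div_gcd_progression_weight:
  fixes p :: nat
  assumes "prime p"
  shows "int p ^ n div gcd (int p ^ n) (progression_weight (int p) m)
    = int p ^ (n - multiplicity p (fact (p * m)))"
proof -
  have "p ^ n div gcd (p ^ n) (p ^ m * fact m) = p ^ (n - multiplicity p (fact (p * m)))"
    using assms prime_power_div_gcd[OF assms, of "p ^ m * fact m" n]
    by (simp add: multiplicity_prime_progression_weight prime_gt_0_nat)
  then show ?thesis
    unfolding progression_weight_def by (metis gcd_int_int_eq of_nat_fact of_nat_mult of_nat_power zdiv_int)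
qed

lemma prime_power_dvd_progression_weight:
  fixes p :: nat
  assumes "prime p" and "n \<le> multiplicity p (fact (p * m))"
  shows "int p ^ n dvd progression_weight (int p) m"
proof -
  have "p ^ n dvd p ^ multiplicity p (p ^ m * fact m)"
    using assms by (simp add: multiplicity_prime_progression_weight le_imp_power_dvd)
  also have "\<dots> dvd p ^ m * fact m"
    by (rule multiplicity_dvd)
  finally show ?thesis
    unfolding progression_weight_def by (metis int_dvd_int_iff of_nat_fact of_nat_mult of_nat_power)
qed

theorem mainTheorem16:
  fixes p n :: nat
  assumes "prime p" and "n \<ge> 1"
  defines "mbar \<equiv> (LEAST m. multiplicity p (fact (p * m) :: nat) \<ge> n)"
  defines "q \<equiv> (\<lambda>m. if m < mbar then int p ^ (n - multiplicity p (fact (p * m) :: nat)) else 1)"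
  shows "Qn p n = gen_ideal ((\<lambda>m. smult (q m) (G p m)) ` {0..mbar})
    \<and> (\<forall>j < p. Qnj p n j =
          gen_ideal ((\<lambda>m. smult (q m) (pcompose (G p m) [:- int j, 1:])) ` {0..mbar}))"
proof -
  have "n \<le> multiplicity p (fact (p * n))"
    using assms(1) by (simp add: multiplicity_fact_prime_mult)
  then have mbar: "n \<le> multiplicity p (fact (p * mbar))"
    unfolding mbar_def by (rule LeastI)
  have q_eq: "q m = int p ^ n div gcd (int p ^ n) (progression_weight (int p) m)" if "m \<le> mbar" for m
    using mbar that unfolding q_def prime_power_div_gcd_progression_weight[OF assms(1)] by auto
  have Qnj_eq: "Qnj p n j = gen_ideal ((\<lambda>m. smult (q m) (pcompose (G p m) [:- int j, 1:])) ` {0..mbar})"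
    if "j < p" for j
  proof -
    have "0 < p" using that by simp
    then have "Qnj p n j = gen_ideal ((\<lambda>m. smult (int p ^ n div gcd (int p ^ n) (progression_weight (int p) m))
        (progression_poly (int j) (int p) m)) ` {0..mbar})"
      using Qnj_eq_values_on_progression[OF \<open>0 < p\<close> that] \<open>0 < p\<close>
        values_on_progression_eq_gen_ideal[OF _ prime_power_dvd_progression_weight[OF assms(1) mbar]]
      by simp
    also have "\<dots> = gen_ideal ((\<lambda>m. smult (q m) (pcompose (G p m) [:- int j, 1:])) ` {0..mbar})"
      by (intro arg_cong[where f = gen_ideal] image_cong refl)
        (simp add: q_eq pcompose_G_eq_progression_poly)
    finally show ?thesis .
  qed
  show ?thesis
    using Qnj_eq[of 0] Qnj_eq prime_gt_0_nat[OF assms(1)] by (simp add: Qn_def pcompose_idR)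
qed

end
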